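(* Let $d\ge1$ and let $\gamma\colon S^1\to\mathbb{R}^{2d}$ be a closed convex curve such that the origin lies in the interior of $\operatorname{conv}(\gamma(S^1))$, and let $\varepsilon>0$. Then there are a (sufficiently large) prime $p$, points $x_1,\dots,x_p$ in $\gamma(S^1)$, and a $\mathbb{Z}/p$-action on $\mathbb{R}^{2d}$ by homeomorphisms mapping rays from the origin to rays from the origin, free on $\mathbb{R}^{2d}\setminus\{0\}$, such that $\{x_1,\dots,x_p\}$ is an orbit of this action; moreover the $x_i$ can be chosen so that every point of $\gamma(S^1)$ is at distance at most $\varepsilon$ from some $x_i$.
   Context: A closed convex curve in $\mathbb{R}^{m}$ is a continuous embedding $\gamma\colon S^1\to\mathbb{R}^m$ such that every affine hyperplane of $\mathbb{R}^m$ meets $\gamma(S^1)$ in at most $m$ points. *)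

theory Defs
  imports "HOL-Analysis.Analysis"
begin

definition S1 :: "complex set" where
  "S1 = sphere 0 1"

text \<open>A closed convex curve in R^m (m = CARD('n)): a continuous embedding of S^1
  (continuous and injective; S^1 is compact, so this is an embedding) such that every
  affine hyperplane meets the image in at most m points.\<close>
definition closed_convex_curve :: "(complex \<Rightarrow> real^'n) \<Rightarrow> bool" where
  "closed_convex_curve \<gamma> \<longleftrightarrow>
     continuous_on S1 \<gamma> \<and> inj_on \<gamma> S1 \<and>
     (\<forall>a b. a \<noteq> 0 \<longrightarrow>
        finite (\<gamma> ` S1 \<inter> {x. a \<bullet> x = b}) \<and>
        card (\<gamma> ` S1 \<inter> {x. a \<bullet> x = b}) \<le> CARD('n))"

definition ray :: "'a::real_vector \<Rightarrow> 'a set" where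
  "ray x = {t *\<^sub>R x | t. t \<ge> 0}"

definition maps_rays :: "('a::real_vector \<Rightarrow> 'a) \<Rightarrow> bool" where
  "maps_rays f \<longleftrightarrow> (\<forall>x. x \<noteq> 0 \<longrightarrow> (\<exists>y. y \<noteq> 0 \<and> f ` ray x = ray y))"

text \<open>A Z/p-action on the space, given by the image g of the generator 1 (the element
  k mod p acts by g^^k): g^^p = id.\<close>
definition Zp_ray_action :: "nat \<Rightarrow> ('a::real_normed_vector \<Rightarrow> 'a) \<Rightarrow> bool" where
  "Zp_ray_action p g \<longleftrightarrow>
     (g ^^ p = id) \<and>
     (\<forall>k<p. (\<exists>h. homeomorphism UNIV UNIV (g ^^ k) h) \<and> maps_rays (g ^^ k)) \<and>
     (\<forall>k. 0 < k \<and> k < p \<longrightarrow> (\<forall>x. x \<noteq> 0 \<longrightarrow> (g ^^ k) x \<noteq> x))"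

end

(*
  Pick a prime p and p points of the curve that are epsilon-dense and such that no two of them
  lie on a common ray from the origin.  This is possible because the curve has no isolated
  points and meets every line through the origin in finitely many points (such a line lies in a
  hyperplane).

  Any such p-point set Y is an orbit of a free Z/p action by ray-preserving homeomorphisms.
  Start from a linear rotation R of order p acting freely off the origin (rotating all planes
  of a pairing of the 2d coordinates) and the R-orbit of a unit vector.  A homeomorphism H of
  the unit sphere carrying this orbit onto the directions of Y exists: in dimension at least 3
  any two p-point configurations can be matched, and on the circle the orbit is matched in
  cyclic order by a piecewise linear map of the angle.  Extending H radially and rescaling
  each ray so that the directions of Y land on Y gives a radial homeomorphism Phi, and
  Phi o R o Phi^-1 is the required action.
*)

theory Submission
  imports Defs "HOL-Computational_Algebra.Primes"
begin

section \<open>Radial homeomorphisms\<close>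

definition pos_homogeneous :: "('a::real_vector \<Rightarrow> 'b::real_vector) \<Rightarrow> bool" where
  "pos_homogeneous f \<longleftrightarrow> (\<forall>t x. t \<ge> 0 \<longrightarrow> f (t *\<^sub>R x) = t *\<^sub>R f x)"

definition radial_homeomorphism ::
    "('a::real_normed_vector \<Rightarrow> 'b::real_normed_vector) \<Rightarrow> ('b \<Rightarrow> 'a) \<Rightarrow> bool" where
  "radial_homeomorphism f f' \<longleftrightarrow> homeomorphism UNIV UNIV f f' \<and> pos_homogeneous f"

lemma pos_homogeneous_zero: "pos_homogeneous f \<Longrightarrow> f 0 = 0"
  unfolding pos_homogeneous_def by (metis scaleR_zero_left order_refl)

lemma radial_homeomorphism_apply:
  assumes "radial_homeomorphism f f'"
  shows "f' (f x) = x" "f (f' y) = y"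
  using assms by (auto simp: radial_homeomorphism_def homeomorphism_def)

lemma radial_homeomorphism_zero: "radial_homeomorphism f f' \<Longrightarrow> f 0 = 0"
  by (simp add: radial_homeomorphism_def pos_homogeneous_zero)

lemma radial_homeomorphism_nonzero:
  assumes "radial_homeomorphism f f'" "x \<noteq> 0"
  shows "f x \<noteq> 0"
  by (metis assms radial_homeomorphism_apply(1) radial_homeomorphism_zero)

lemma radial_homeomorphism_sym:
  assumes "radial_homeomorphism f f'"
  shows "radial_homeomorphism f' f"
proof -
  have h: "homeomorphism UNIV UNIV f f'" and p: "pos_homogeneous f"
    using assms by (auto simp: radial_homeomorphism_def)
  have "f' (t *\<^sub>R y) = t *\<^sub>R f' y" if "t \<ge> 0" for t y
  proof -
    have "f' (t *\<^sub>R y) = f' (t *\<^sub>R f (f' y))" by (simp add: radial_homeomorphism_apply[OF assms])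
    also have "\<dots> = f' (f (t *\<^sub>R f' y))" using p that by (simp add: pos_homogeneous_def)
    finally show ?thesis by (simp add: radial_homeomorphism_apply[OF assms])
  qed
  then show ?thesis
    using homeomorphism_symD[OF h] by (simp add: radial_homeomorphism_def pos_homogeneous_def)
qed

lemma radial_homeomorphism_compose:
  assumes "radial_homeomorphism f f'" "radial_homeomorphism g g'"
  shows "radial_homeomorphism (f \<circ> g) (g' \<circ> f')"
  using assms homeomorphism_compose[of UNIV UNIV g g' UNIV f f']
  by (auto simp: radial_homeomorphism_def pos_homogeneous_def)

lemma homeomorphism_UNIV_I:
  assumes "continuous_on UNIV f" "continuous_on UNIV g" "\<And>x. g (f x) = x" "\<And>y. f (g y) = y"
  shows "homeomorphism UNIV UNIV f g"
  using assms surjI[of f g] surjI[of g f] by (auto simp: homeomorphism_def)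

lemma radial_homeomorphism_linear:
  fixes L :: "'a::euclidean_space \<Rightarrow> 'b::euclidean_space"
  assumes "linear L" "linear L'" "\<And>x. L' (L x) = x" "\<And>y. L (L' y) = y"
  shows "radial_homeomorphism L L'"
  using assms homeomorphism_UNIV_I[of L L'] linear_continuous_on[of L] linear_continuous_on[of L']
  by (auto simp: radial_homeomorphism_def pos_homogeneous_def linear_scale linear_conv_bounded_linear)

lemma radial_homeomorphism_image_ray:
  assumes "radial_homeomorphism f f'"
  shows "f ` ray x = ray (f x)"
proof -
  have "f (t *\<^sub>R x) = t *\<^sub>R f x" if "t \<ge> 0" for t
    using assms that by (simp add: radial_homeomorphism_def pos_homogeneous_def)
  then have "f ` {t *\<^sub>R x |t. 0 \<le> t} = {t *\<^sub>R f x |t. 0 \<le> t}" by force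
  then show ?thesis unfolding ray_def .
qed

lemma radial_homeomorphism_maps_rays: "radial_homeomorphism f f' \<Longrightarrow> maps_rays f"
  by (meson maps_rays_def radial_homeomorphism_image_ray radial_homeomorphism_nonzero)

lemma sgn_eq_iff_pos_multiple:
  fixes x y :: "'a::real_normed_vector"
  assumes "x \<noteq> 0" "y \<noteq> 0"
  shows "sgn x = sgn y \<longleftrightarrow> (\<exists>c>0. x = c *\<^sub>R y)"
proof
  assume "sgn x = sgn y"
  moreover have "x = norm x *\<^sub>R sgn x"
    using assms by (simp add: sgn_div_norm)
  ultimately have "x = norm x *\<^sub>R sgn y" by simp
  also have "\<dots> = (norm x / norm y) *\<^sub>R y" by (simp add: sgn_div_norm divide_inverse)
  finally show "\<exists>c>0. x = c *\<^sub>R y" using assms by (intro exI[of _ "norm x / norm y"]) simp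
qed (auto simp: sgn_scaleR)

definition ray_separated :: "'a::real_normed_vector set \<Rightarrow> bool" where
  "ray_separated Y \<longleftrightarrow> 0 \<notin> Y \<and> inj_on sgn Y"

lemma ray_separated_image:
  assumes f: "radial_homeomorphism f f'" and Y: "ray_separated Y"
  shows "ray_separated (f ` Y)"
proof -
  have "a = b" if "a \<in> Y" "b \<in> Y" and sgn_eq: "sgn (f a) = sgn (f b)" for a b
  proof -
    have nz: "a \<noteq> 0" "b \<noteq> 0" using Y that by (auto simp: ray_separated_def)
    then obtain c where "c > 0" "f a = c *\<^sub>R f b"
      using sgn_eq sgn_eq_iff_pos_multiple radial_homeomorphism_nonzero[OF f] by metis
    have "a = c *\<^sub>R b"
    proof -
      have "pos_homogeneous f'"
        using radial_homeomorphism_sym[OF f] by (simp add: radial_homeomorphism_def)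
      then have "f' (c *\<^sub>R f b) = c *\<^sub>R f' (f b)"
        using \<open>c > 0\<close> by (simp add: pos_homogeneous_def)
      then show ?thesis
        using \<open>f a = c *\<^sub>R f b\<close> by (metis radial_homeomorphism_apply(1)[OF f])
    qed
    then have "sgn a = sgn b" using \<open>c > 0\<close> nz sgn_eq_iff_pos_multiple by blast
    then show ?thesis using Y that by (auto simp: ray_separated_def inj_on_def)
  qed
  moreover have "0 \<notin> f ` Y"
    using Y radial_homeomorphism_nonzero[OF f] by (force simp: ray_separated_def)
  ultimately show ?thesis
    unfolding ray_separated_def inj_on_def by blast
qed

section \<open>Free actions of \<open>\<int>/p\<close> by radial homeomorphisms\<close>

lemma funpow_conj:
  assumes "\<And>x. f' (f x) = x" "\<And>y. f (f' y) = y"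
  shows "(f \<circ> R \<circ> f') ^^ k = f \<circ> (R ^^ k) \<circ> f'"
  by (induction k) (use assms in \<open>auto simp: fun_eq_iff\<close>)

lemma maps_rays_conj:
  assumes f: "radial_homeomorphism f f'" and g: "maps_rays g"
  shows "maps_rays (f \<circ> g \<circ> f')"
  unfolding maps_rays_def
proof (intro allI impI)
  fix x :: 'b assume "x \<noteq> 0"
  have f': "radial_homeomorphism f' f" using radial_homeomorphism_sym[OF f] .
  obtain y where "y \<noteq> 0" "g ` ray (f' x) = ray y"
    using g radial_homeomorphism_nonzero[OF f' \<open>x \<noteq> 0\<close>] by (auto simp: maps_rays_def)
  have "(f \<circ> g \<circ> f') ` ray x = f ` g ` f' ` ray x" by (simp add: image_comp)
  also have "\<dots> = ray (f y)"
    using \<open>g ` ray (f' x) = ray y\<close>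
    by (simp add: radial_homeomorphism_image_ray[OF f'] radial_homeomorphism_image_ray[OF f])
  finally have "(f \<circ> g \<circ> f') ` ray x = ray (f y)" .
  then show "\<exists>y. y \<noteq> 0 \<and> (f \<circ> g \<circ> f') ` ray x = ray y"
    using radial_homeomorphism_nonzero[OF f \<open>y \<noteq> 0\<close>] by blast
qed

lemma Zp_ray_action_conj:
  assumes g: "Zp_ray_action p g" and f: "radial_homeomorphism f f'"
  shows "Zp_ray_action p (f \<circ> g \<circ> f')"
proof -
  have inv: "\<And>x. f' (f x) = x" "\<And>y. f (f' y) = y" using radial_homeomorphism_apply[OF f] .
  note pow = funpow_conj[where R = g, OF inv]
  have hf: "homeomorphism UNIV UNIV f f'" "homeomorphism UNIV UNIV f' f"
    using f radial_homeomorphism_sym[OF f] by (auto simp: radial_homeomorphism_def)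
  have "(\<exists>h. homeomorphism UNIV UNIV ((f \<circ> g \<circ> f') ^^ k) h) \<and> maps_rays ((f \<circ> g \<circ> f') ^^ k)"
    if "k < p" for k
  proof -
    obtain h where h: "homeomorphism UNIV UNIV (g ^^ k) h" and r: "maps_rays (g ^^ k)"
      using g \<open>k < p\<close> by (auto simp: Zp_ray_action_def)
    have "homeomorphism UNIV UNIV (f \<circ> ((g ^^ k) \<circ> f')) ((f \<circ> h) \<circ> f')"
      using homeomorphism_compose[OF homeomorphism_compose[OF hf(2) h] hf(1)] .
    then show ?thesis
      using maps_rays_conj[OF f r] by (auto simp: pow o_assoc)
  qed
  moreover have "((f \<circ> g \<circ> f') ^^ k) x \<noteq> x" if "0 < k" "k < p" "x \<noteq> 0" for k x
  proof
    assume "((f \<circ> g \<circ> f') ^^ k) x = x"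
    then have "f' (f ((g ^^ k) (f' x))) = f' x" by (simp add: pow)
    then have "(g ^^ k) (f' x) = f' x" by (simp only: inv(1))
    moreover have "f' x \<noteq> 0"
      using radial_homeomorphism_nonzero[OF radial_homeomorphism_sym[OF f] \<open>x \<noteq> 0\<close>] .
    ultimately show False using g that by (auto simp: Zp_ray_action_def)
  qed
  moreover have "(f \<circ> g \<circ> f') ^^ p = id"
    using g inv by (simp add: pow Zp_ray_action_def fun_eq_iff)
  ultimately show ?thesis by (simp add: Zp_ray_action_def)
qed

lemma Zp_ray_actionI:
  assumes "g ^^ p = id" and "\<And>k. k < p \<Longrightarrow> \<exists>h. radial_homeomorphism (g ^^ k) h"
    and "\<And>k x. 0 < k \<Longrightarrow> k < p \<Longrightarrow> x \<noteq> 0 \<Longrightarrow> (g ^^ k) x \<noteq> x"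
  shows "Zp_ray_action p g"
proof -
  have "(\<exists>h. homeomorphism UNIV UNIV (g ^^ k) h) \<and> maps_rays (g ^^ k)" if "k < p" for k
    using assms(2)[OF that] radial_homeomorphism_maps_rays
    by (auto simp: radial_homeomorphism_def)
  then show ?thesis using assms(1,3) by (simp add: Zp_ray_action_def)
qed

definition Zp_ray_orbit :: "nat \<Rightarrow> 'a::real_normed_vector set \<Rightarrow> bool" where
  "Zp_ray_orbit p Y \<longleftrightarrow> (\<exists>g y. Zp_ray_action p g \<and> y \<in> Y \<and> Y = {(g ^^ k) y | k. k < p})"

lemma Zp_ray_orbit_image:
  assumes f: "radial_homeomorphism f f'" and Y: "Zp_ray_orbit p Y"
  shows "Zp_ray_orbit p (f ` Y)"
proof -
  obtain g y where g: "Zp_ray_action p g" "y \<in> Y" "Y = {(g ^^ k) y | k. k < p}"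
    using Y by (auto simp: Zp_ray_orbit_def)
  have inv: "\<And>x. f' (f x) = x" "\<And>y. f (f' y) = y" using radial_homeomorphism_apply[OF f] .
  have "((f \<circ> g \<circ> f') ^^ k) (f y) = f ((g ^^ k) y)" for k
    by (simp add: funpow_conj[where R = g, OF inv] inv)
  then have orbit: "f ` Y = {((f \<circ> g \<circ> f') ^^ k) (f y) | k. k < p}"
    unfolding g(3) by auto
  show ?thesis
    unfolding Zp_ray_orbit_def
    by (intro exI[of _ "f \<circ> g \<circ> f'"] exI[of _ "f y"] conjI Zp_ray_action_conj[OF g(1) f]
        imageI[OF g(2)] orbit)
qed

lemma Zp_ray_action_orbit_inj:
  assumes g: "Zp_ray_action p g" and nz: "\<And>k. k < p \<Longrightarrow> (g ^^ k) x \<noteq> 0"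
  shows "inj_on (\<lambda>k. (g ^^ k) x) {..<p}"
proof -
  have "(g ^^ j) x \<noteq> (g ^^ k) x" if "j < k" "k < p" for j k
  proof
    assume eq: "(g ^^ j) x = (g ^^ k) x"
    have "(g ^^ k) x = (g ^^ (k - j)) ((g ^^ j) x)"
      using that by (metis funpow_add le_add_diff_inverse2 less_imp_le comp_apply)
    then have "(g ^^ (k - j)) ((g ^^ j) x) = (g ^^ j) x" using eq by simp
    moreover have "\<forall>y. y \<noteq> 0 \<longrightarrow> (g ^^ (k - j)) y \<noteq> y"
      using g that by (simp add: Zp_ray_action_def)
    ultimately show False using nz[of j] that by simp
  qed
  then show ?thesis
    unfolding inj_on_def by (metis lessThan_iff linorder_neqE_nat)
qed

lemma Zp_ray_orbit_enumerate:
  assumes "Zp_ray_orbit p Y"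
  obtains g and x :: "nat \<Rightarrow> 'a::real_normed_vector"
  where "Zp_ray_action p g" "x ` {1..p} = Y" "Y = {(g ^^ k) (x 1) | k. k < p}"
proof -
  obtain g y where g: "Zp_ray_action p g" "y \<in> Y" "Y = {(g ^^ k) y | k. k < p}"
    using assms by (auto simp: Zp_ray_orbit_def)
  define x where "x i = (g ^^ (i - 1)) y" for i
  have "x ` {1..p} = x ` Suc ` {..<p}" by (simp only: image_Suc_lessThan)
  also have "\<dots> = (\<lambda>k. (g ^^ k) y) ` {..<p}" by (simp add: image_image x_def)
  finally have "x ` {1..p} = (\<lambda>k. (g ^^ k) y) ` {..<p}" .
  then have "x ` {1..p} = Y" using g(3) by auto
  moreover have "x 1 = y" by (simp add: x_def)
  ultimately show thesis using that[OF g(1), of x] g(3) by simp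
qed

section \<open>Coning off homeomorphisms of the unit sphere\<close>

lemma continuous_on_UNIV_from_punctured:
  fixes f :: "'a::real_normed_vector \<Rightarrow> 'b::real_normed_vector"
  assumes "continuous_on (- {0}) f" and "f 0 = 0" and "\<And>x. norm (f x) \<le> B * norm x"
  shows "continuous_on UNIV f"
proof -
  have "isCont f x" for x
  proof (cases "x = 0")
    case False
    then show ?thesis
      using assms(1) continuous_on_eq_continuous_at[of "- {0}" f] by auto
  next
    case True
    have "eventually (\<lambda>y. norm (f y) \<le> B * norm y) (at 0)"
      using assms(3) by (simp add: always_eventually)
    moreover have "((\<lambda>y. B * norm y) \<longlongrightarrow> 0) (at (0::'a))"
      using tendsto_mult[OF tendsto_const[of B] tendsto_norm_zero[OF tendsto_ident_at]] by simp
    ultimately have "(f \<longlongrightarrow> 0) (at 0)"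
      by (rule Lim_null_comparison)
    then show ?thesis using True assms(2) by (simp add: isCont_def)
  qed
  then show ?thesis by (simp add: continuous_at_imp_continuous_on)
qed

lemma continuous_on_sgn_punctured: "continuous_on (- {0}) (sgn :: 'a::real_normed_vector \<Rightarrow> 'a)"
  by (intro continuous_intros) auto

lemma sgn_in_sphere: "(x::'a::real_normed_vector) \<noteq> 0 \<Longrightarrow> sgn x \<in> sphere 0 1"
  by (simp add: norm_sgn)

definition radial_extension :: "('a::real_normed_vector \<Rightarrow> 'a) \<Rightarrow> 'a \<Rightarrow> 'a" where
  "radial_extension H x = norm x *\<^sub>R H (sgn x)"

definition radial_rescaling :: "('a::real_normed_vector \<Rightarrow> real) \<Rightarrow> 'a \<Rightarrow> 'a" where
  "radial_rescaling \<rho> x = \<rho> (sgn x) *\<^sub>R x"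

lemma pos_homogeneousI_sgn:
  assumes "f 0 = 0" and "\<And>t x. t > 0 \<Longrightarrow> f (t *\<^sub>R x) = t *\<^sub>R f x"
  shows "pos_homogeneous f"
  using assms by (auto simp: pos_homogeneous_def order_le_less)

lemma pos_homogeneous_radial_extension: "pos_homogeneous (radial_extension H)"
  by (rule pos_homogeneousI_sgn) (auto simp: radial_extension_def sgn_scaleR)

lemma pos_homogeneous_radial_rescaling: "pos_homogeneous (radial_rescaling \<rho>)"
  by (rule pos_homogeneousI_sgn) (auto simp: radial_rescaling_def sgn_scaleR)

lemma norm_radial_extension:
  assumes "H ` sphere 0 1 \<subseteq> sphere 0 1"
  shows "norm (radial_extension H x) = norm x"
proof (cases "x = 0")
  case False
  then have "H (sgn x) \<in> sphere 0 1" using assms sgn_in_sphere by blast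
  then show ?thesis by (simp add: radial_extension_def)
qed (simp add: radial_extension_def)

lemma radial_extension_inverse:
  assumes H: "homeomorphism (sphere 0 1) (sphere 0 1) H H'"
  shows "radial_extension H' (radial_extension H x) = x"
proof (cases "x = 0")
  case True
  then show ?thesis by (simp add: radial_extension_def)
next
  case False
  have Hs: "H (sgn x) \<in> sphere 0 1" "H' (H (sgn x)) = sgn x"
    using H sgn_in_sphere[OF False] by (auto simp: homeomorphism_def)
  then have "sgn (radial_extension H x) = H (sgn x)"
    using False by (simp add: radial_extension_def sgn_scaleR sgn_div_norm)
  moreover have "norm (radial_extension H x) = norm x"
    using H by (intro norm_radial_extension) (simp add: homeomorphism_def)
  ultimately show ?thesis
    using Hs by (simp add: radial_extension_def[of H'] sgn_div_norm False)
qed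

lemma continuous_on_radial_extension:
  assumes H: "homeomorphism (sphere 0 1) (sphere 0 1) H H'"
  shows "continuous_on UNIV (radial_extension H)"
proof (rule continuous_on_UNIV_from_punctured[where B = 1])
  have "continuous_on (- {0}) (\<lambda>x. H (sgn x))"
    using H by (intro continuous_on_compose2[OF _ continuous_on_sgn_punctured])
      (auto simp: homeomorphism_def norm_sgn split: if_splits)
  then show "continuous_on (- {0}) (radial_extension H)"
    unfolding radial_extension_def by (intro continuous_intros)
  show "norm (radial_extension H x) \<le> 1 * norm x" for x
    using H norm_radial_extension[of H x] by (simp add: homeomorphism_def)
qed (simp add: radial_extension_def)

lemma radial_homeomorphism_radial_extension:
  assumes H: "homeomorphism (sphere 0 1) (sphere 0 1) H H'"
  shows "radial_homeomorphism (radial_extension H) (radial_extension H')"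
  unfolding radial_homeomorphism_def
proof
  have H': "homeomorphism (sphere 0 1) (sphere 0 1) H' H" using homeomorphism_symD[OF H] .
  show "homeomorphism UNIV UNIV (radial_extension H) (radial_extension H')"
    by (rule homeomorphism_UNIV_I[OF continuous_on_radial_extension[OF H]
          continuous_on_radial_extension[OF H'] radial_extension_inverse[OF H]
          radial_extension_inverse[OF H']])
qed (rule pos_homogeneous_radial_extension)

lemma radial_rescaling_inverse:
  assumes "\<rho> (sgn x) > 0"
  shows "radial_rescaling (\<lambda>w. inverse (\<rho> w)) (radial_rescaling \<rho> x) = x"
  using assms by (simp add: radial_rescaling_def sgn_scaleR)

lemma continuous_on_radial_rescaling:
  fixes \<rho> :: "'a::euclidean_space \<Rightarrow> real"
  assumes \<rho>: "continuous_on UNIV \<rho>"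
  shows "continuous_on UNIV (radial_rescaling \<rho>)"
proof -
  have "bounded (\<rho> ` sphere 0 1)"
    by (intro compact_imp_bounded compact_continuous_image continuous_on_subset[OF \<rho>]) auto
  then obtain B where B: "\<And>w. w \<in> sphere 0 1 \<Longrightarrow> \<bar>\<rho> w\<bar> \<le> B"
    unfolding bounded_real by blast
  show ?thesis
  proof (rule continuous_on_UNIV_from_punctured[where B = B])
    show "continuous_on (- {0}) (radial_rescaling \<rho>)"
      unfolding radial_rescaling_def
      by (intro continuous_intros continuous_on_compose2[OF \<rho> continuous_on_sgn_punctured]) auto
    show "norm (radial_rescaling \<rho> x) \<le> B * norm x" for x
      using B[OF sgn_in_sphere[of x]] by (cases "x = 0") (auto simp: radial_rescaling_def mult_right_mono)
  qed (simp add: radial_rescaling_def)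
qed

lemma radial_homeomorphism_radial_rescaling:
  fixes \<rho> :: "'a::euclidean_space \<Rightarrow> real"
  assumes "continuous_on UNIV \<rho>" and "\<And>w. \<rho> w > 0"
  shows "radial_homeomorphism (radial_rescaling \<rho>) (radial_rescaling (\<lambda>w. inverse (\<rho> w)))"
proof -
  have "continuous_on UNIV (\<lambda>w. inverse (\<rho> w))"
    using assms by (intro continuous_intros) (auto simp: less_imp_neq[symmetric])
  moreover have "radial_rescaling \<rho> (radial_rescaling (\<lambda>w. inverse (\<rho> w)) y) = y" for y
    using radial_rescaling_inverse[of "\<lambda>w. inverse (\<rho> w)" y] assms(2) by simp
  ultimately show ?thesis
    using assms radial_rescaling_inverse[of \<rho>]
    by (simp add: radial_homeomorphism_def pos_homogeneous_radial_rescaling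
        homeomorphism_UNIV_I continuous_on_radial_rescaling)
qed

lemma positive_continuous_interpolant:
  fixes W :: "'a::metric_space set" and c :: "'a \<Rightarrow> real"
  assumes W: "finite W" and c: "\<And>w. w \<in> W \<Longrightarrow> c w > 0"
  obtains \<rho> where "continuous_on UNIV \<rho>" "\<And>v. \<rho> v > 0" "\<And>w. w \<in> W \<Longrightarrow> \<rho> w = c w"
proof -
  define lagrange where "lagrange w v = (\<Prod>w'\<in>W - {w}. dist v w' / dist w w')" for w v
  define \<rho> where "\<rho> v = exp (\<Sum>w\<in>W. ln (c w) * lagrange w v)" for v
  have "continuous_on UNIV \<rho>"
    unfolding \<rho>_def lagrange_def by (intro continuous_intros) auto
  moreover have "\<rho> w = c w" if "w \<in> W" for w
  proof -
    have "lagrange w' w = 0" if "w' \<in> W - {w}" for w'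
      using W that \<open>w \<in> W\<close> by (auto simp: lagrange_def intro!: prod_zero bexI[of _ w])
    moreover have "lagrange w w = 1"
      unfolding lagrange_def by (rule prod.neutral) auto
    ultimately have "(\<Sum>w'\<in>W. ln (c w') * lagrange w' w) = ln (c w)"
      using W that by (simp add: sum.remove)
    then show ?thesis using c[OF that] by (simp add: \<rho>_def)
  qed
  ultimately show ?thesis using that by (simp add: \<rho>_def)
qed

lemma radial_homeomorphism_onto_directions:
  fixes H :: "'a::euclidean_space \<Rightarrow> 'a"
  assumes H: "homeomorphism (sphere 0 1) (sphere 0 1) H H'"
    and Y: "finite Y" "ray_separated Y"
  obtains \<Phi> \<Phi>' where "radial_homeomorphism \<Phi> \<Phi>'"
    "\<And>v y. norm v = 1 \<Longrightarrow> y \<in> Y \<Longrightarrow> H v = sgn y \<Longrightarrow> \<Phi> v = y"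
proof -
  have inv: "inv_into Y sgn (sgn y) = y" if "y \<in> Y" for y
    using Y that by (simp add: ray_separated_def inv_into_f_f)
  have "norm (inv_into Y sgn w) > 0" if "w \<in> sgn ` Y" for w
    using that inv Y by (auto simp: ray_separated_def)
  then obtain \<rho> where \<rho>: "continuous_on UNIV \<rho>" "\<And>v. \<rho> v > 0"
    and \<rho>_norm: "\<And>w. w \<in> sgn ` Y \<Longrightarrow> \<rho> w = norm (inv_into Y sgn w)"
    using positive_continuous_interpolant[of "sgn ` Y" "\<lambda>w. norm (inv_into Y sgn w)"] Y(1) by blast
  \<comment> \<open>the direction of \<open>\<Phi> v\<close> comes from \<open>H\<close>, its length from \<open>\<rho>\<close>\<close>
  define \<Phi> where "\<Phi> = radial_rescaling \<rho> \<circ> radial_extension H"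
  have "radial_homeomorphism \<Phi> (radial_extension H' \<circ> radial_rescaling (\<lambda>w. inverse (\<rho> w)))"
    unfolding \<Phi>_def
    by (intro radial_homeomorphism_compose radial_homeomorphism_radial_rescaling
        radial_homeomorphism_radial_extension \<rho> H)
  moreover have "\<Phi> v = y" if "norm v = 1" "y \<in> Y" "H v = sgn y" for v y
  proof -
    have "y \<noteq> 0" using Y that(2) by (auto simp: ray_separated_def)
    then have "\<rho> (sgn y) = norm y" using \<rho>_norm inv that(2) by simp
    moreover have "sgn v = v" using that(1) by (simp add: sgn_div_norm)
    ultimately show ?thesis
      using that \<open>y \<noteq> 0\<close>
      by (simp add: \<Phi>_def radial_rescaling_def radial_extension_def sgn_div_norm norm_sgn)
  qed
  ultimately show ?thesis by (rule that)
qed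

lemma Zp_ray_orbit_orbit:
  assumes "Zp_ray_action p R" "p > 0"
  shows "Zp_ray_orbit p {(R ^^ k) u | k. k < p}"
proof -
  have "u \<in> {(R ^^ k) u | k. k < p}"
    using assms(2) by (intro CollectI exI[of _ 0]) simp
  then show ?thesis
    unfolding Zp_ray_orbit_def by (intro exI[of _ R] exI[of _ u] conjI assms(1)) simp_all
qed

lemma Zp_ray_orbit_from_sphere:
  fixes R H :: "'a::euclidean_space \<Rightarrow> 'a"
  assumes R: "Zp_ray_action p R" "p > 0"
    and H: "homeomorphism (sphere 0 1) (sphere 0 1) H H'"
    and u: "\<And>k. k < p \<Longrightarrow> norm ((R ^^ k) u) = 1"
    and img: "(\<lambda>k. H ((R ^^ k) u)) ` {..<p} = sgn ` Y"
    and Y: "ray_separated Y"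
  shows "Zp_ray_orbit p Y"
proof -
  have "finite Y"
    using Y finite_imageD[of sgn Y] img by (metis finite_imageI finite_lessThan ray_separated_def)
  then obtain \<Phi> \<Phi>' where \<Phi>: "radial_homeomorphism \<Phi> \<Phi>'"
    and \<Phi>_unit: "\<And>v y. norm v = 1 \<Longrightarrow> y \<in> Y \<Longrightarrow> H v = sgn y \<Longrightarrow> \<Phi> v = y"
    by (rule radial_homeomorphism_onto_directions[OF H _ Y]) (rule that)
  have "\<Phi> ` {(R ^^ k) u | k. k < p} = Y"
  proof
    show "\<Phi> ` {(R ^^ k) u | k. k < p} \<subseteq> Y"
    proof
      fix z assume "z \<in> \<Phi> ` {(R ^^ k) u | k. k < p}"
      then obtain k where k: "k < p" "z = \<Phi> ((R ^^ k) u)" by auto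
      then obtain y where "y \<in> Y" "H ((R ^^ k) u) = sgn y" using img by blast
      then show "z \<in> Y" using \<Phi>_unit u k by simp
    qed
    show "Y \<subseteq> \<Phi> ` {(R ^^ k) u | k. k < p}"
    proof
      fix y assume "y \<in> Y"
      then have "sgn y \<in> (\<lambda>k. H ((R ^^ k) u)) ` {..<p}" using img by simp
      then obtain k where "k < p" "H ((R ^^ k) u) = sgn y" by auto
      then have "y = \<Phi> ((R ^^ k) u)" using \<Phi>_unit u \<open>y \<in> Y\<close> by simp
      then show "y \<in> \<Phi> ` {(R ^^ k) u | k. k < p}" using \<open>k < p\<close> by blast
    qed
  qed
  then show ?thesis using Zp_ray_orbit_image[OF \<Phi> Zp_ray_orbit_orbit[OF R, of u]] by simp
qed

section \<open>Moving finitely many points of a sphere\<close>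

lemma continuous_on_conj_punctured:
  fixes f :: "'a::metric_space \<Rightarrow> 'b::heine_borel"
  assumes f: "homeomorphism (S - {c}) T f f'" and F: "homeomorphism T T F F'"
    and T: "closed T" and D: "D \<subseteq> T" "bounded D" and F_id: "\<And>y. y \<in> T - D \<Longrightarrow> F y = y"
    and c: "c \<in> S"
  shows "continuous_on S (\<lambda>x. if x = c then c else f' (F (f x)))"
proof -
  let ?H = "\<lambda>x. if x = c then c else f' (F (f x))"
  have fT: "\<And>x. x \<in> S - {c} \<Longrightarrow> f x \<in> T" and f'S: "\<And>y. y \<in> T \<Longrightarrow> f' y \<in> S - {c}"
    using homeomorphism_image1[OF f] homeomorphism_image2[OF f] by blast+
  have f'f: "\<And>x. x \<in> S - {c} \<Longrightarrow> f' (f x) = x" using homeomorphism_apply1[OF f] by blast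
  have FT: "\<And>y. y \<in> T \<Longrightarrow> F y \<in> T" using homeomorphism_image1[OF F] by blast
  have "continuous_on (S - {c}) (\<lambda>x. f' (F (f x)))"
    by (intro continuous_on_compose2[OF homeomorphism_cont2[OF f]]
        continuous_on_compose2[OF homeomorphism_cont1[OF F]] homeomorphism_cont1[OF f])
      (use fT FT in auto)
  then have near_punctured: "continuous_on (S - {c}) ?H"
    by (rule continuous_on_eq) auto
  \<comment> \<open>\<open>?H\<close> is the identity off the compact set \<open>K\<close>, which does not contain \<open>c\<close>\<close>
  define K where "K = f' ` closure D"
  have clD: "closure D \<subseteq> T" using D T closure_minimal by blast
  have "compact K"
    unfolding K_def using D(2)
    by (intro compact_continuous_image continuous_on_subset[OF homeomorphism_cont2[OF f] clD])
      (simp add: compact_closure)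
  have "c \<notin> K" unfolding K_def using clD f'S by auto
  have "?H x = x" if "x \<in> S - K" for x
  proof (cases "x = c")
    case False
    then have x: "x \<in> S - {c}" using that by simp
    have "f x \<notin> D"
    proof
      assume "f x \<in> D"
      then have "f' (f x) \<in> K" unfolding K_def using closure_subset by blast
      then show False using f'f[OF x] that by simp
    qed
    then show ?thesis using F_id fT[OF x] f'f[OF x] False by simp
  qed simp
  then have near_c: "continuous_on (S - K) ?H"
    by (intro continuous_on_eq[OF continuous_on_id]) simp
  have "openin (top_of_set S) (S - {c})" by (simp add: openin_delete)
  moreover have "openin (top_of_set S) (S \<inter> - K)"
    using \<open>compact K\<close> by (intro openin_open_Int) (simp add: compact_imp_closed open_Compl)
  then have "openin (top_of_set S) (S - K)" by (simp add: Diff_eq)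
  moreover have "(S - {c}) \<union> (S - K) = S" using \<open>c \<notin> K\<close> c by auto
  ultimately show ?thesis
    using continuous_on_Un_local_open[OF _ _ near_punctured near_c] by simp
qed

lemma homeomorphism_conj_punctured:
  fixes f :: "'a::metric_space \<Rightarrow> 'b::heine_borel"
  assumes f: "homeomorphism (S - {c}) T f f'" and F: "homeomorphism T T F F'"
    and T: "closed T" and D: "D \<subseteq> T" "bounded D"
    and F_id: "\<And>y. y \<in> T - D \<Longrightarrow> F y = y \<and> F' y = y" and c: "c \<in> S"
  shows "homeomorphism S S (\<lambda>x. if x = c then c else f' (F (f x)))
           (\<lambda>x. if x = c then c else f' (F' (f x)))"
proof -
  have fT: "\<And>x. x \<in> S - {c} \<Longrightarrow> f x \<in> T" and f'S: "\<And>y. y \<in> T \<Longrightarrow> f' y \<in> S - {c}"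
    using homeomorphism_image1[OF f] homeomorphism_image2[OF f] by blast+
  have ff: "\<And>x. x \<in> S - {c} \<Longrightarrow> f' (f x) = x" "\<And>y. y \<in> T \<Longrightarrow> f (f' y) = y"
    using homeomorphism_apply1[OF f] homeomorphism_apply2[OF f] by blast+
  have FT: "\<And>y. y \<in> T \<Longrightarrow> F y \<in> T" "\<And>y. y \<in> T \<Longrightarrow> F' y \<in> T"
    using homeomorphism_image1[OF F] homeomorphism_image2[OF F] by blast+
  have FF: "\<And>y. y \<in> T \<Longrightarrow> F' (F y) = y" "\<And>y. y \<in> T \<Longrightarrow> F (F' y) = y"
    using homeomorphism_apply1[OF F] homeomorphism_apply2[OF F] by blast+
  let ?H = "\<lambda>x. if x = c then c else f' (F (f x))"
  let ?H' = "\<lambda>x. if x = c then c else f' (F' (f x))"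
  have in_S: "?H x \<in> S - {c}" "?H' x \<in> S - {c}" if "x \<in> S - {c}" for x
    using that fT FT f'S by simp_all
  have "?H' (?H x) = x \<and> ?H (?H' x) = x" if "x \<in> S" for x
  proof (cases "x = c")
    case False
    then have "x \<in> S - {c}" using that by simp
    then show ?thesis using in_S[of x] ff fT FT FF by auto
  qed simp
  moreover have "?H ` S \<subseteq> S" "?H' ` S \<subseteq> S" using in_S c by auto
  moreover have "continuous_on S ?H"
    using F_id by (intro continuous_on_conj_punctured[OF f F T D _ c]) blast
  moreover have "continuous_on S ?H'"
    using F_id by (intro continuous_on_conj_punctured[OF f homeomorphism_symD[OF F] T D _ c]) blast
  ultimately show ?thesis by (intro homeomorphismI) auto
qed

lemma infinite_unit_sphere:
  assumes "2 \<le> DIM('a::euclidean_space)"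
  shows "infinite (sphere (0::'a) 1)"
proof
  assume fin: "finite (sphere (0::'a) 1)"
  obtain e :: 'a where e: "e \<in> Basis" using nonempty_Basis by blast
  have "e \<noteq> - e"
  proof
    assume "e = - e"
    then have "2 *\<^sub>R e = 0" by (metis add.right_inverse scaleR_2)
    then show False using e nonzero_Basis by auto
  qed
  moreover have "e \<in> sphere 0 1" "- e \<in> sphere 0 1" using e by auto
  moreover have "connected (sphere (0::'a) 1)" using connected_sphere assms by blast
  ultimately obtain z where "sphere (0::'a) 1 = {z}"
    using fin connected_finite_iff_sing \<open>e \<in> sphere 0 1\<close> by blast
  then show False using \<open>e \<noteq> - e\<close> \<open>e \<in> sphere 0 1\<close> \<open>- e \<in> sphere 0 1\<close> by simp
qed

lemma hyperplane_homeomorphism_moving_points: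
  fixes x y :: "nat \<Rightarrow> 'a::euclidean_space"
  assumes e: "e \<noteq> 0" and dim: "3 \<le> DIM('a)"
    and xy: "\<And>k. k < p \<Longrightarrow> x k \<in> {z. e \<bullet> z = 0} \<and> y k \<in> {z. e \<bullet> z = 0}"
    and inj: "inj_on x {..<p}" "inj_on y {..<p}"
  obtains F F' where "homeomorphism {z. e \<bullet> z = 0} {z. e \<bullet> z = 0} F F'" "\<And>k. k < p \<Longrightarrow> F (x k) = y k"
    "{z. \<not> (F z = z \<and> F' z = z)} \<subseteq> {z. e \<bullet> z = 0}" "bounded {z. \<not> (F z = z \<and> F' z = z)}"
proof -
  let ?T = "{z::'a. e \<bullet> z = 0}"
  have "\<exists>F F'. homeomorphism ?T ?T F F' \<and> (\<forall>k\<in>{..<p}. F (x k) = y k) \<and>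
      {z. \<not> (F z = z \<and> F' z = z)} \<subseteq> ?T \<and> bounded {z. \<not> (F z = z \<and> F' z = z)}"
  proof (rule homeomorphism_moving_points_exists_gen)
    show "pairwise (\<lambda>i j. x i \<noteq> x j \<and> y i \<noteq> y j) {..<p}"
      using inj by (auto simp: pairwise_def inj_on_def)
    show "2 \<le> aff_dim ?T" using e dim by simp
    show "openin (top_of_set (affine hull ?T)) ?T" by (simp add: affine_hyperplane hull_same)
    show "connected ?T" by (rule convex_connected[OF convex_hyperplane])
  qed (use xy in \<open>simp_all add: hull_subset\<close>)
  then show ?thesis using that by auto
qed

lemma sphere_homeomorphism_moving_points:
  fixes a b :: "nat \<Rightarrow> 'a::euclidean_space"
  assumes dim: "3 \<le> DIM('a)"
    and ab: "\<And>k. k < p \<Longrightarrow> a k \<in> sphere 0 1 \<and> b k \<in> sphere 0 1"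
    and inj: "inj_on a {..<p}" "inj_on b {..<p}"
  obtains H H' where "homeomorphism (sphere 0 1) (sphere 0 1) H H'" "\<And>k. k < p \<Longrightarrow> H (a k) = b k"
proof -
  let ?S = "sphere (0::'a) 1"
  \<comment> \<open>puncture the sphere at a point \<open>c\<close> off both configurations and move the points in the hyperplane
    homeomorphic to \<open>?S - {c}\<close>, where there is room since its dimension is at least 2\<close>
  have "infinite (?S - (a ` {..<p} \<union> b ` {..<p}))"
    using infinite_unit_sphere[where 'a = 'a] dim by (simp add: Diff_infinite_finite)
  then obtain c where "c \<in> ?S - (a ` {..<p} \<union> b ` {..<p})"
    using infinite_imp_nonempty by blast
  then have c: "c \<in> ?S" "c \<notin> a ` {..<p}" "c \<notin> b ` {..<p}" by auto
  obtain e :: 'a where e: "e \<in> Basis" using nonempty_Basis by blast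
  define T where "T = {x::'a. e \<bullet> x = 0}"
  have "e \<noteq> 0" using e nonzero_Basis by blast
  then have "(?S - {c}) homeomorphic T"
    unfolding T_def using c(1) by (intro homeomorphic_punctured_sphere_hyperplane) simp_all
  then obtain f f' where f: "homeomorphism (?S - {c}) T f f'"
    unfolding homeomorphic_def by blast
  have fT: "\<And>x. x \<in> ?S - {c} \<Longrightarrow> f x \<in> T" and f'f: "\<And>x. x \<in> ?S - {c} \<Longrightarrow> f' (f x) = x"
    using homeomorphism_image1[OF f] homeomorphism_apply1[OF f] by blast+
  have ab_c: "\<And>k. k < p \<Longrightarrow> a k \<in> ?S - {c} \<and> b k \<in> ?S - {c}" using ab c by auto
  have "inj_on f (?S - {c})" using f'f by (rule inj_on_inverseI)
  then have "inj_on (f \<circ> a) {..<p}" "inj_on (f \<circ> b) {..<p}"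
    using inj ab_c by (auto intro!: comp_inj_on inj_on_subset[of f "?S - {c}"])
  moreover have "\<And>k. k < p \<Longrightarrow> (f \<circ> a) k \<in> T \<and> (f \<circ> b) k \<in> T" using fT ab_c by simp
  ultimately obtain F F' where F: "homeomorphism T T F F'" and F_ab: "\<And>k. k < p \<Longrightarrow> F (f (a k)) = f (b k)"
    and D: "{x. \<not> (F x = x \<and> F' x = x)} \<subseteq> T" "bounded {x. \<not> (F x = x \<and> F' x = x)}"
    using hyperplane_homeomorphism_moving_points[OF \<open>e \<noteq> 0\<close> dim, of p "f \<circ> a" "f \<circ> b"]
    unfolding T_def by auto
  define H where "H x = (if x = c then c else f' (F (f x)))" for x
  define H' where "H' x = (if x = c then c else f' (F' (f x)))" for x
  have "homeomorphism ?S ?S H H'"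
    unfolding H_def H'_def
    by (rule homeomorphism_conj_punctured[OF f F closed_hyperplane[of e 0, folded T_def] D _ c(1)])
      blast
  moreover have "H (a k) = b k" if "k < p" for k
  proof -
    have "a k \<noteq> c" using ab_c[OF that] by blast
    then show ?thesis using F_ab[OF that] f'f ab_c[OF that] by (simp add: H_def)
  qed
  ultimately show ?thesis by (rule that)
qed



section \<open>The plane\<close>

definition clamp01 :: "real \<Rightarrow> real" where
  "clamp01 s = max 0 (min 1 s)"

text \<open>Piecewise linear interpolation of the values \<open>\<alpha> k\<close> at the nodes \<open>2\<pi>k/p\<close>, \<open>k \<le> p\<close>.\<close>
definition pl_interp :: "nat \<Rightarrow> (nat \<Rightarrow> real) \<Rightarrow> real \<Rightarrow> real" where
  "pl_interp p \<alpha> \<theta> =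
     \<alpha> 0 + (\<Sum>k<p. (\<alpha> (Suc k) - \<alpha> k) * clamp01 (\<theta> * real p / (2 * pi) - real k))"

lemma continuous_on_pl_interp: "continuous_on UNIV (pl_interp p \<alpha>)"
  unfolding pl_interp_def clamp01_def by (intro continuous_intros) auto

lemma pl_interp_node:
  assumes "p > 0" "j \<le> p"
  shows "pl_interp p \<alpha> (2 * pi * real j / real p) = \<alpha> j"
proof -
  have "(\<Sum>k<p. (\<alpha> (Suc k) - \<alpha> k) * clamp01 (real j - real k)) =
        (\<Sum>k\<in>{..<p} \<inter> {..<j}. \<alpha> (Suc k) - \<alpha> k)"
    by (subst sum.inter_restrict) (auto simp: clamp01_def intro!: sum.cong)
  also have "{..<p} \<inter> {..<j} = {..<j}" using assms by auto
  finally show ?thesis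
    using assms by (simp add: pl_interp_def sum_lessThan_telescope)
qed

lemma pl_interp_strict_mono:
  assumes p: "p > 0" and inc: "\<And>k. k < p \<Longrightarrow> \<alpha> k < \<alpha> (Suc k)"
    and ab: "0 \<le> a" "a < b" "b \<le> 2 * pi"
  shows "pl_interp p \<alpha> a < pl_interp p \<alpha> b"
proof -
  define sa where "sa = a * real p / (2 * pi)"
  define sb where "sb = b * real p / (2 * pi)"
  have "sa < sb" unfolding sa_def sb_def using ab p by (simp add: divide_strict_right_mono)
  have "0 \<le> sa" unfolding sa_def using ab by simp
  have "sa < real p"
  proof -
    have "a * real p < 2 * pi * real p" using ab p by simp
    then show ?thesis unfolding sa_def by (simp add: divide_less_eq mult.commute)
  qed
  define k0 where "k0 = nat \<lfloor>sa\<rfloor>"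
  have k0: "real k0 \<le> sa" "sa < real k0 + 1"
    unfolding k0_def using \<open>0 \<le> sa\<close> by (auto simp: of_nat_nat)
  then have "k0 < p" using \<open>sa < real p\<close> by linarith
  define t where "t k = (\<alpha> (Suc k) - \<alpha> k) * (clamp01 (sb - real k) - clamp01 (sa - real k))" for k
  have "0 \<le> t k" if "k < p" for k
    using inc[OF that] \<open>sa < sb\<close> by (simp add: t_def clamp01_def)
  moreover have "0 < t k0"
    using inc[OF \<open>k0 < p\<close>] k0 \<open>sa < sb\<close> by (simp add: t_def clamp01_def)
  ultimately have "0 < (\<Sum>k<p. t k)"
    using member_le_sum[of k0 "{..<p}" t] \<open>k0 < p\<close> by simp
  moreover have "pl_interp p \<alpha> b - pl_interp p \<alpha> a = (\<Sum>k<p. t k)"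
    unfolding pl_interp_def t_def sa_def sb_def by (simp add: sum_subtractf[symmetric] algebra_simps)
  ultimately show ?thesis by simp
qed

lemma Arg2pi_cis: "0 \<le> t \<Longrightarrow> t < 2 * pi \<Longrightarrow> Arg2pi (cis t) = t"
  by (rule Arg2pi_unique[of 1]) (simp_all add: cis_conv_exp)

lemma cis_Arg2pi: "norm z = 1 \<Longrightarrow> cis (Arg2pi z) = z"
  using Arg2pi[of z] by (simp add: is_Arg_def cis_conv_exp)

lemma cis_inj_on_2pi: "inj_on cis {0..<2 * pi}"
  by (rule inj_on_inverseI[where g = Arg2pi]) (simp add: Arg2pi_cis)

lemma cis_image_2pi: "cis ` {0..2 * pi} = sphere 0 1"
proof
  show "sphere 0 1 \<subseteq> cis ` {0..2 * pi}"
  proof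
    fix w :: complex assume "w \<in> sphere 0 1"
    then have "w = cis (Arg2pi w)" "Arg2pi w \<in> {0..2 * pi}"
      using cis_Arg2pi Arg2pi[of w] by auto
    then show "w \<in> cis ` {0..2 * pi}" by blast
  qed
qed auto

lemma cis_lift_Arg2pi_cis:
  assumes "F (2 * pi) = F 0 + 2 * pi" and "0 \<le> \<theta>" "\<theta> \<le> 2 * pi"
  shows "cis (F (Arg2pi (cis \<theta>))) = cis (F \<theta>)"
proof (cases "\<theta> = 2 * pi")
  case True
  then show ?thesis using assms(1) Arg2pi_cis[of 0] by (simp add: cis.ctr)
qed (use assms in \<open>simp add: Arg2pi_cis\<close>)

lemma continuous_on_circle_lift:
  assumes F: "continuous_on {0..2 * pi} F" and period: "F (2 * pi) = F 0 + 2 * pi"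
  shows "continuous_on (sphere 0 1) (\<lambda>z. cis (F (Arg2pi z)))"
proof -
  let ?H = "\<lambda>z. cis (F (Arg2pi z))"
  let ?X = "top_of_set {0..2 * pi}" and ?Y = "top_of_set (sphere (0::complex) 1)"
  have "quotient_map ?X ?Y cis"
    using cis_image_2pi
    by (intro continuous_imp_quotient_map)
      (auto intro!: continuous_intros simp: compact_space_subtopology Hausdorff_space_subtopology)
  moreover have "continuous_on {0..2 * pi} (?H \<circ> cis)"
    using continuous_on_cis[OF F] by (rule continuous_on_eq) (simp add: cis_lift_Arg2pi_cis[OF period])
  ultimately show ?thesis
    using continuous_compose_quotient_map by (metis continuous_map_iff_continuous)
qed

lemma circle_homeomorphism_from_lift:
  assumes F: "continuous_on {0..2 * pi} F"
    and mono: "\<And>a b. 0 \<le> a \<Longrightarrow> a < b \<Longrightarrow> b \<le> 2 * pi \<Longrightarrow> F a < F b"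
    and period: "F (2 * pi) = F 0 + 2 * pi" and start: "0 \<le> F 0" "F 0 < 2 * pi"
  obtains H H' where "homeomorphism (sphere 0 1) (sphere 0 1) H H'"
    "\<And>\<theta>. 0 \<le> \<theta> \<Longrightarrow> \<theta> \<le> 2 * pi \<Longrightarrow> H (cis \<theta>) = cis (F \<theta>)"
proof -
  let ?S = "sphere (0::complex) 1"
  define H where "H z = cis (F (Arg2pi z))" for z
  have H_cis: "H (cis \<theta>) = cis (F \<theta>)" if "0 \<le> \<theta>" "\<theta> \<le> 2 * pi" for \<theta>
    unfolding H_def using cis_lift_Arg2pi_cis[OF period that] .
  have "continuous_on ?S H"
    unfolding H_def by (rule continuous_on_circle_lift[OF F period])
  moreover have "inj_on H ?S"
  proof
    fix z w assume zw: "z \<in> ?S" "w \<in> ?S" "H z = H w"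
    let ?a = "Arg2pi z" and ?b = "Arg2pi w"
    have range: "F 0 \<le> F t \<and> F t < F 0 + 2 * pi" if "0 \<le> t" "t < 2 * pi" for t
      using mono[of 0 t] mono[of t "2 * pi"] period that by (cases "t = 0") auto
    have "cis (F ?a - F 0) = cis (F ?b - F 0)"
      using zw(3) by (simp add: H_def cis_divide[symmetric])
    then have "F ?a = F ?b"
      using inj_onD[OF cis_inj_on_2pi] range[of ?a] range[of ?b] Arg2pi[of z] Arg2pi[of w] by force
    then have "?a = ?b"
      using mono[of ?a ?b] mono[of ?b ?a] Arg2pi[of z] Arg2pi[of w] by (metis less_le not_less_iff_gr_or_eq)
    then show "z = w" using cis_Arg2pi zw(1,2) by (metis mem_sphere_0)
  qed
  moreover have "H ` ?S = ?S"
  proof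
    show "?S \<subseteq> H ` ?S"
    proof
      fix w :: complex assume "w \<in> ?S"
      define \<tau> where "\<tau> = (if F 0 \<le> Arg2pi w then Arg2pi w else Arg2pi w + 2 * pi)"
      have "F 0 \<le> \<tau>" "\<tau> \<le> F (2 * pi)"
        using Arg2pi[of w] start period by (auto simp: \<tau>_def)
      then obtain \<theta> where \<theta>: "0 \<le> \<theta>" "\<theta> \<le> 2 * pi" "F \<theta> = \<tau>"
        using IVT'[of F 0 \<tau> "2 * pi"] F by force
      have "cis \<tau> = w" using \<open>w \<in> ?S\<close> cis_Arg2pi by (simp add: \<tau>_def cis.ctr)
      then have "w = H (cis \<theta>)" using H_cis[OF \<theta>(1,2)] \<theta>(3) by simp
      then show "w \<in> H ` ?S" by simp
    qed
  qed (auto simp: H_def)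
  ultimately obtain H' where "homeomorphism ?S ?S H H'"
    using homeomorphism_compact[OF compact_sphere] by blast
  then show ?thesis using that H_cis by blast
qed

lemma circle_points_angles:
  fixes B :: "complex set"
  assumes p: "p > 0" and B: "finite B" "B \<subseteq> sphere 0 1" "card B = p"
  obtains \<alpha> where "\<And>k. k < p \<Longrightarrow> \<alpha> k < \<alpha> (Suc k)" "\<alpha> p = \<alpha> 0 + 2 * pi" "0 \<le> \<alpha> 0" "\<alpha> 0 < 2 * pi"
    "(\<lambda>k. cis (\<alpha> k)) ` {..<p} = B"
proof -
  have cis_Arg2pi_B: "cis (Arg2pi z) = z" if "z \<in> B" for z
    using B(2) that by (intro cis_Arg2pi) auto
  then have inj: "inj_on Arg2pi B" by (rule inj_on_inverseI)
  obtain xs where xs: "sorted_wrt (<) xs" "set xs = Arg2pi ` B" "length xs = card (Arg2pi ` B)"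
    using finite_set_strict_sorted[where A = "Arg2pi ` B"] B(1) by auto
  have len: "length xs = p" using xs(3) B(3) card_image[OF inj] by simp
  have xs_range: "0 \<le> xs ! k \<and> xs ! k < 2 * pi" if "k < p" for k
  proof -
    have "xs ! k \<in> Arg2pi ` B" using xs(2) len that nth_mem by metis
    then show ?thesis using Arg2pi by auto
  qed
  define \<alpha> where "\<alpha> k = (if k < p then xs ! k else xs ! 0 + 2 * pi)" for k
  have inc: "\<alpha> k < \<alpha> (Suc k)" if "k < p" for k
  proof (cases "Suc k < p")
    case True
    then show ?thesis using sorted_wrt_nth_less[OF xs(1), of k "Suc k"] len by (simp add: \<alpha>_def)
  next
    case False
    then show ?thesis using that xs_range[of k] xs_range[of 0] p by (simp add: \<alpha>_def)
  qed
  have "(\<lambda>k. cis (\<alpha> k)) ` {..<p} = (\<lambda>k. cis (xs ! k)) ` {..<p}"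
    by (simp add: \<alpha>_def)
  also have "\<dots> = cis ` set xs"
    using len by (auto simp: set_conv_nth)
  also have "\<dots> = B"
    using cis_Arg2pi_B by (simp add: xs(2) image_image)
  finally show ?thesis
    using that[of \<alpha>, OF inc] xs_range[of 0] p by (simp add: \<alpha>_def)
qed

lemma circle_homeomorphism_onto_points:
  fixes B :: "complex set"
  assumes p: "p > 0" and B: "finite B" "B \<subseteq> sphere 0 1" "card B = p"
  obtains H H' where "homeomorphism (sphere 0 1) (sphere 0 1) H H'"
    "(\<lambda>k. H (cis (2 * pi * real k / real p))) ` {..<p} = B"
proof -
  obtain \<alpha> where inc: "\<And>k. k < p \<Longrightarrow> \<alpha> k < \<alpha> (Suc k)" and \<alpha>: "\<alpha> p = \<alpha> 0 + 2 * pi"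
    "0 \<le> \<alpha> 0" "\<alpha> 0 < 2 * pi" and img: "(\<lambda>k. cis (\<alpha> k)) ` {..<p} = B"
    by (rule circle_points_angles[OF p B]) (rule that)
  define F where "F = pl_interp p \<alpha>"
  have nodes: "F (2 * pi * real k / real p) = \<alpha> k" if "k \<le> p" for k
    unfolding F_def using pl_interp_node[OF p that] .
  obtain H H' where H: "homeomorphism (sphere 0 1) (sphere 0 1) H H'"
    and H_cis: "\<And>\<theta>. 0 \<le> \<theta> \<Longrightarrow> \<theta> \<le> 2 * pi \<Longrightarrow> H (cis \<theta>) = cis (F \<theta>)"
  proof (rule circle_homeomorphism_from_lift)
    show "continuous_on {0..2 * pi} F"
      unfolding F_def by (rule continuous_on_subset[OF continuous_on_pl_interp]) simp
    show "F a < F b" if "0 \<le> a" "a < b" "b \<le> 2 * pi" for a b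
      unfolding F_def using pl_interp_strict_mono[of p \<alpha>, OF p inc that] .
    show "F (2 * pi) = F 0 + 2 * pi" "0 \<le> F 0" "F 0 < 2 * pi"
      using nodes[of 0] nodes[of p] p \<alpha> by simp_all
  qed blast
  have "H (cis (2 * pi * real k / real p)) = cis (\<alpha> k)" if "k < p" for k
  proof -
    have "2 * pi * real k / real p \<le> 2 * pi" using that p by (simp add: field_simps)
    then show ?thesis using that H_cis[of "2 * pi * real k / real p"] nodes[of k] by simp
  qed
  then have "(\<lambda>k. H (cis (2 * pi * real k / real p))) ` {..<p} = B"
    using img by (simp add: image_def)
  then show ?thesis by (rule that[OF H])
qed

lemma funpow_mult_left: "((\<lambda>z. c * z) ^^ k) = (\<lambda>z::'a::monoid_mult. c ^ k * z)"
  by (induction k) (simp_all add: fun_eq_iff mult.assoc)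

lemma cis_2pi_div_power: "cis (2 * pi / real p) ^ k = cis (2 * pi * real k / real p)"
  unfolding Complex.DeMoivre by (simp add: field_simps)

lemma Zp_ray_action_complex_rotation:
  assumes p: "p > 0"
  shows "Zp_ray_action p (\<lambda>z. cis (2 * pi / real p) * z)"
proof (rule Zp_ray_actionI)
  note pow = cis_2pi_div_power
  show "(\<lambda>z. cis (2 * pi / real p) * z) ^^ p = id"
    using p by (simp add: funpow_mult_left pow fun_eq_iff)
  show "\<exists>h. radial_homeomorphism ((\<lambda>z. cis (2 * pi / real p) * z) ^^ k) h" for k
  proof -
    let ?c = "cis (2 * pi / real p) ^ k"
    have "radial_homeomorphism (\<lambda>z. ?c * z) (\<lambda>z. inverse ?c * z)"
      using bounded_linear.linear[OF bounded_linear_mult_right]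
      by (intro radial_homeomorphism_linear) auto
    then show ?thesis unfolding funpow_mult_left by blast
  qed
  show "((\<lambda>z. cis (2 * pi / real p) * z) ^^ k) x \<noteq> x" if "0 < k" "k < p" "x \<noteq> 0" for k x
  proof
    assume "((\<lambda>z. cis (2 * pi / real p) * z) ^^ k) x = x"
    then have "cis (2 * pi * real k / real p) = cis 0"
      using \<open>x \<noteq> 0\<close> by (simp add: funpow_mult_left pow)
    moreover have "2 * pi * real k / real p \<in> {0..<2 * pi}"
      using that by (simp add: field_simps)
    ultimately have "2 * pi * real k / real p = 0"
      using inj_onD[OF cis_inj_on_2pi, of "2 * pi * real k / real p" 0] by simp
    then show False using that by simp
  qed
qed

lemma Zp_ray_orbit_complex:
  fixes Y :: "complex set"
  assumes p: "p > 0" and Y: "finite Y" "card Y = p" "ray_separated Y"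
  shows "Zp_ray_orbit p Y"
proof -
  have B: "sgn ` Y \<subseteq> sphere 0 1" "card (sgn ` Y) = p"
    using Y card_image[of sgn Y] by (auto simp: ray_separated_def norm_sgn)
  obtain H H' where H: "homeomorphism (sphere 0 1) (sphere 0 1) H H'"
    and img: "(\<lambda>k. H (cis (2 * pi * real k / real p))) ` {..<p} = sgn ` Y"
    by (rule circle_homeomorphism_onto_points[OF p finite_imageI[OF Y(1)] B])
  let ?R = "\<lambda>z. cis (2 * pi / real p) * z"
  have orbit: "(?R ^^ k) 1 = cis (2 * pi * real k / real p)" for k
    by (simp only: funpow_mult_left cis_2pi_div_power mult_1_right)
  show ?thesis
    by (rule Zp_ray_orbit_from_sphere[where u = 1, OF Zp_ray_action_complex_rotation[OF p] p H _ _ Y(3)])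
      (simp_all add: orbit img)
qed

lemma Zp_ray_orbit_plane:
  fixes Y :: "'a::euclidean_space set"
  assumes dim: "DIM('a) = 2" and p: "p > 0"
    and Y: "finite Y" "card Y = p" "ray_separated Y"
  shows "Zp_ray_orbit p Y"
proof -
  have "DIM(complex) = DIM('a)" using dim by simp
  then obtain L :: "complex \<Rightarrow> 'a" and L' where L: "linear L" "linear L'"
    and "\<And>x. norm (L x) = norm x" "\<And>y. norm (L' y) = norm y"
    and LL': "\<And>x. L' (L x) = x" "\<And>y. L (L' y) = y"
    by (rule isomorphisms_UNIV_UNIV) (rule that)
  have L_radial: "radial_homeomorphism L L'" "radial_homeomorphism L' L"
    using L LL' by (auto intro: radial_homeomorphism_linear)
  have "inj_on L' Y" by (rule inj_on_inverseI[where g = L]) (simp add: LL')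
  then have "card (L' ` Y) = p" using Y(2) by (simp add: card_image)
  then have "Zp_ray_orbit p (L' ` Y)"
    using Zp_ray_orbit_complex[OF p finite_imageI[OF Y(1)] _ ray_separated_image[OF L_radial(2) Y(3)]]
    by blast
  then have "Zp_ray_orbit p (L ` L' ` Y)"
    using Zp_ray_orbit_image \<open>radial_homeomorphism L L'\<close> by blast
  then show ?thesis by (simp add: image_image LL')
qed

section \<open>Rotations in even dimension\<close>

locale coordinate_pairing =
  fixes \<pi> :: "'n::finite \<Rightarrow> 'n" and \<sigma> :: "'n \<Rightarrow> real"
  assumes \<pi>_involution: "\<And>i. \<pi> (\<pi> i) = i" and \<pi>_no_fixpoint: "\<And>i. \<pi> i \<noteq> i"
    and \<sigma>_square: "\<And>i. \<sigma> i * \<sigma> i = 1" and \<sigma>_\<pi>: "\<And>i. \<sigma> (\<pi> i) = - \<sigma> i"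

lemma coordinate_pairing_exists:
  assumes "CARD('n::finite) = 2 * d"
  shows "\<exists>\<pi> (\<sigma> :: 'n \<Rightarrow> real). coordinate_pairing \<pi> \<sigma>"
proof -
  obtain b :: "'n \<Rightarrow> nat" where b: "bij_betw b UNIV {0..<2 * d}"
    using ex_bij_betw_finite_nat[of "UNIV :: 'n set"] assms by auto
  define b' where "b' = inv_into UNIV b"
  have b_less: "b i < 2 * d" for i using b by (auto simp: bij_betw_def)
  have b_b': "b (b' m) = m" if "m < 2 * d" for m
    unfolding b'_def using b that by (simp add: bij_betw_def f_inv_into_f)
  have b'_b: "b' (b i) = i" for i
    unfolding b'_def using b by (simp add: bij_betw_def inv_into_f_f)
  define q where "q m = (if even m then m + 1 else m - 1)" for m :: nat
  have q_less: "q m < 2 * d" if "m < 2 * d" for m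
    using that unfolding q_def by presburger
  define \<pi> where "\<pi> i = b' (q (b i))" for i
  define \<sigma> where "\<sigma> i = (if even (b i) then (1::real) else -1)" for i
  have b_\<pi>: "b (\<pi> i) = q (b i)" for i unfolding \<pi>_def using b_b' q_less b_less by simp
  have "\<pi> (\<pi> i) = i" for i
    using b_\<pi> b'_b by (simp add: \<pi>_def q_def)
  moreover have "\<pi> i \<noteq> i" for i
  proof -
    have "q (b i) \<noteq> b i" unfolding q_def by presburger
    then show ?thesis using b_\<pi>[of i] by metis
  qed
  moreover have "\<sigma> i * \<sigma> i = 1" for i by (simp add: \<sigma>_def)
  moreover have "\<sigma> (\<pi> i) = - \<sigma> i" for i
    using b_\<pi>[of i] by (cases "even (b i)") (auto simp: \<sigma>_def q_def)
  ultimately show ?thesis unfolding coordinate_pairing_def by blast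
qed

context coordinate_pairing
begin

text \<open>Rotation by the angle \<open>t\<close> simultaneously in all the planes spanned by paired coordinates.\<close>
definition rotation :: "real \<Rightarrow> real^'n \<Rightarrow> real^'n" where
  "rotation t x = (\<chi> i. cos t * x $ i - \<sigma> i * sin t * x $ \<pi> i)"

lemma rotation_add: "rotation s (rotation t x) = rotation (s + t) x"
proof -
  have "\<sigma> i * sin s * (\<sigma> (\<pi> i) * sin t * x $ \<pi> (\<pi> i)) = - sin s * sin t * x $ i" for i
    using \<sigma>_square[of i] by (simp add: \<sigma>_\<pi> \<pi>_involution algebra_simps)
  then show ?thesis
    by (simp add: rotation_def vec_eq_iff cos_add sin_add algebra_simps)
qed

lemma rotation_zero: "rotation 0 x = x"
  by (simp add: rotation_def vec_eq_iff)

lemma funpow_rotation: "rotation t ^^ k = rotation (real k * t)"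
  by (induction k) (simp_all add: fun_eq_iff rotation_zero rotation_add algebra_simps)

lemma linear_rotation: "linear (rotation t)"
  by (rule linearI) (simp_all add: rotation_def vec_eq_iff algebra_simps)

lemma radial_homeomorphism_rotation: "radial_homeomorphism (rotation t) (rotation (- t))"
  by (rule radial_homeomorphism_linear[OF linear_rotation linear_rotation])
    (simp_all add: rotation_add rotation_zero)

lemma rotation_fixpoint:
  assumes "cos t \<noteq> 1" and "rotation t x = x"
  shows "x = 0"
proof -
  let ?c = "cos t" and ?s = "sin t"
  have "x $ i = 0" for i
  proof -
    let ?A = "x $ i" and ?B = "x $ \<pi> i"
    have eqA: "(1 - ?c) * ?A = - (\<sigma> i * ?s * ?B)" and eqB: "(1 - ?c) * ?B = \<sigma> i * ?s * ?A"
      using assms(2) unfolding rotation_def vec_eq_iff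
      by (auto simp: \<pi>_involution \<sigma>_\<pi> algebra_simps dest: spec[of _ i] spec[of _ "\<pi> i"])
    \<comment> \<open>eliminating \<open>?B\<close> leaves a multiple of \<open>?A\<close> whose coefficient is \<open>2 - 2 cos t \<noteq> 0\<close>\<close>
    have "((1 - ?c)\<^sup>2 + ?s\<^sup>2) * ?A = (1 - ?c) * ((1 - ?c) * ?A) + ?s\<^sup>2 * ?A"
      by algebra
    also have "\<dots> = - (\<sigma> i * ?s) * ((1 - ?c) * ?B) + ?s\<^sup>2 * ?A"
      by (subst eqA) (simp add: algebra_simps)
    also have "\<dots> = - (\<sigma> i * \<sigma> i) * ?s\<^sup>2 * ?A + ?s\<^sup>2 * ?A"
      by (subst eqB) (simp add: power2_eq_square algebra_simps)
    also have "\<dots> = 0" using \<sigma>_square by simp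
    finally have "((1 - ?c)\<^sup>2 + ?s\<^sup>2) * ?A = 0" .
    moreover have "(1 - ?c)\<^sup>2 + ?s\<^sup>2 = 2 - 2 * ?c"
      using sin_cos_squared_add[of t] by (simp add: power2_eq_square algebra_simps)
    moreover have "?c < 1" using assms(1) cos_le_one[of t] by linarith
    ultimately show ?thesis by simp
  qed
  then show ?thesis by (simp add: vec_eq_iff)
qed

lemma norm_rotation_axis: "norm (rotation t (axis j 1)) = 1"
proof -
  have "\<pi> i = j \<longleftrightarrow> i = \<pi> j" for i using \<pi>_involution by metis
  then have eq: "rotation t (axis j 1) = cos t *\<^sub>R axis j 1 + (- \<sigma> (\<pi> j) * sin t) *\<^sub>R axis (\<pi> j) 1"
    by (auto simp: rotation_def vec_eq_iff axis_def)
  have "(norm (rotation t (axis j 1)))\<^sup>2 = (cos t)\<^sup>2 + (\<sigma> (\<pi> j) * \<sigma> (\<pi> j)) * (sin t)\<^sup>2"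
    unfolding eq power2_norm_eq_inner using \<pi>_no_fixpoint[of j]
    by (simp add: inner_add_left inner_add_right inner_axis_axis power2_eq_square algebra_simps)
  then have "(norm (rotation t (axis j 1)))\<^sup>2 = 1\<^sup>2" using \<sigma>_square by simp
  then show ?thesis by (rule power2_eq_imp_eq) simp_all
qed

lemma Zp_ray_action_rotation:
  assumes p: "p > 0"
  shows "Zp_ray_action p (rotation (2 * pi / real p))"
proof (rule Zp_ray_actionI)
  show "rotation (2 * pi / real p) ^^ p = id"
    using p by (simp add: funpow_rotation fun_eq_iff rotation_def vec_eq_iff)
  show "\<exists>h. radial_homeomorphism (rotation (2 * pi / real p) ^^ k) h" for k
    unfolding funpow_rotation using radial_homeomorphism_rotation by blast
  show "(rotation (2 * pi / real p) ^^ k) x \<noteq> x" if "0 < k" "k < p" "x \<noteq> 0" for k x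
  proof -
    have "cos (real k * (2 * pi / real p)) \<noteq> 1"
    proof
      assume "cos (real k * (2 * pi / real p)) = 1"
      then obtain n :: int where "real k * (2 * pi / real p) = real_of_int n * 2 * pi"
        using cos_one_2pi_int by blast
      then have "real k = real_of_int n * real p" using p by (simp add: field_simps)
      then have "int k = n * int p" by (metis of_int_eq_iff of_int_mult of_int_of_nat_eq)
      moreover have "n * int p \<le> 0 \<or> int p \<le> n * int p"
        by (cases "n \<le> 0") (simp_all add: mult_nonpos_nonneg mult_le_cancel_right1)
      ultimately show False using that by linarith
    qed
    then show ?thesis unfolding funpow_rotation using rotation_fixpoint \<open>x \<noteq> 0\<close> by blast
  qed
qed

lemma Zp_ray_orbit_rotation:
  fixes Y :: "(real^'n) set"
  assumes dim: "3 \<le> CARD('n)" and p: "p > 0"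
    and Y: "finite Y" "card Y = p" "ray_separated Y"
  shows "Zp_ray_orbit p Y"
proof -
  define R where "R = rotation (2 * pi / real p)"
  define u :: "real^'n" where "u = axis undefined 1"
  have R: "Zp_ray_action p R" unfolding R_def using Zp_ray_action_rotation[OF p] .
  have u: "norm ((R ^^ k) u) = 1" for k
    unfolding R_def funpow_rotation u_def by (rule norm_rotation_axis)
  have "card {..<p} = card (sgn ` Y)"
    using card_image[of sgn Y] Y by (simp add: ray_separated_def)
  then obtain b where b: "bij_betw b {..<p} (sgn ` Y)"
    using finite_same_card_bij[of "{..<p}" "sgn ` Y"] Y(1) by blast
  have "b k \<in> sphere 0 1" if k: "k < p" for k
  proof -
    obtain y where "y \<in> Y" "b k = sgn y" using b k by (auto simp: bij_betw_def)
    then show ?thesis using Y(3) by (auto simp: ray_separated_def norm_sgn)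
  qed
  then have ab: "\<And>k. k < p \<Longrightarrow> (R ^^ k) u \<in> sphere 0 1 \<and> b k \<in> sphere 0 1" using u by simp
  have "(R ^^ k) u \<noteq> 0" for k using u[of k] by auto
  then have "inj_on (\<lambda>k. (R ^^ k) u) {..<p}" by (rule Zp_ray_action_orbit_inj[OF R])
  moreover have "inj_on b {..<p}" using b by (simp add: bij_betw_def)
  moreover have "3 \<le> DIM(real^'n)" using dim by simp
  ultimately obtain H H' where H: "homeomorphism (sphere 0 1) (sphere 0 1) H H'"
    and Hb: "\<And>k. k < p \<Longrightarrow> H ((R ^^ k) u) = b k"
    using sphere_homeomorphism_moving_points[where a = "\<lambda>k. (R ^^ k) u" and b = b and p = p, OF _ ab]
    by blast
  have "(\<lambda>k. H ((R ^^ k) u)) ` {..<p} = sgn ` Y"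
    using Hb b by (simp add: bij_betw_def)
  then show ?thesis
    by (rule Zp_ray_orbit_from_sphere[OF R p H u _ Y(3)])
qed

end

lemma Zp_ray_orbit_even_dim:
  fixes Y :: "(real^'n) set"
  assumes dim: "CARD('n) = 2 * d" and p: "p > 0"
    and Y: "finite Y" "card Y = p" "ray_separated Y"
  shows "Zp_ray_orbit p Y"
proof (cases "CARD('n) = 2")
  case True
  then show ?thesis using Zp_ray_orbit_plane[OF _ p Y] by simp
next
  case False
  then have "3 \<le> CARD('n)" using dim by (cases d) auto
  moreover obtain \<pi> :: "'n \<Rightarrow> 'n" and \<sigma> where "coordinate_pairing \<pi> \<sigma>"
    using coordinate_pairing_exists[OF dim] by blast
  ultimately show ?thesis
    using coordinate_pairing.Zp_ray_orbit_rotation[OF _ _ p Y] by blast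
qed

section \<open>Choosing the points on the curve\<close>

lemma ray_separated_extend:
  fixes C :: "'a::real_normed_vector set"
  assumes lines: "\<And>v. finite (C \<inter> range (\<lambda>t. t *\<^sub>R v))"
    and Y: "finite Y" "ray_separated Y" and A: "A \<subseteq> C" "infinite A"
  obtains q where "q \<in> A" "q \<notin> Y" "ray_separated (insert q Y)"
proof -
  \<comment> \<open>\<open>q\<close> must avoid \<open>0\<close> and the lines through \<open>0\<close> and the points of \<open>Y\<close>; these meet \<open>C\<close> in a finite set\<close>
  define bad where "bad = (\<Union>y\<in>insert 0 Y. C \<inter> range (\<lambda>t. t *\<^sub>R y))"
  have "finite bad" unfolding bad_def using Y(1) lines by blast
  then have "infinite (A - bad)" using A(2) by (simp add: Diff_infinite_finite)
  then obtain q where q: "q \<in> A" "q \<notin> bad"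
    using infinite_imp_nonempty by blast
  then have "q \<in> C" using A(1) by blast
  have "q \<noteq> 0" using q \<open>q \<in> C\<close> by (auto simp: bad_def)
  have off_lines: "q \<noteq> t *\<^sub>R y" if "y \<in> Y" for y t
    using q \<open>q \<in> C\<close> that by (auto simp: bad_def)
  have "q \<notin> Y" using off_lines[of q 1] by auto
  moreover have "sgn q \<noteq> sgn y" if "y \<in> Y" for y
  proof -
    have "y \<noteq> 0" using Y(2) that by (auto simp: ray_separated_def)
    then show ?thesis
      using sgn_eq_iff_pos_multiple[of q y] \<open>q \<noteq> 0\<close> off_lines[OF that] by blast
  qed
  ultimately have "ray_separated (insert q Y)"
    using Y(2) \<open>q \<noteq> 0\<close> by (auto simp: ray_separated_def)
  then show ?thesis by (rule that[OF q(1) \<open>q \<notin> Y\<close>])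
qed

lemma ray_separated_grow:
  fixes C :: "'a::real_normed_vector set"
  assumes lines: "\<And>v. finite (C \<inter> range (\<lambda>t. t *\<^sub>R v))" and C: "infinite C"
  shows "finite Y \<Longrightarrow> Y \<subseteq> C \<Longrightarrow> ray_separated Y \<Longrightarrow> card Y \<le> m \<Longrightarrow>
    \<exists>Y'. Y \<subseteq> Y' \<and> finite Y' \<and> Y' \<subseteq> C \<and> ray_separated Y' \<and> card Y' = m"
proof (induction m)
  case 0
  then show ?case by auto
next
  case (Suc m)
  show ?case
  proof (cases "card Y = Suc m")
    case False
    then have "card Y \<le> m" using Suc.prems by simp
    then obtain Y' where Y': "Y \<subseteq> Y'" "finite Y'" "Y' \<subseteq> C" "ray_separated Y'" "card Y' = m"
      using Suc.IH Suc.prems by blast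
    obtain q where "q \<in> C" "q \<notin> Y'" "ray_separated (insert q Y')"
      by (rule ray_separated_extend[OF lines Y'(2,4) order_refl C])
    then show ?thesis using Y' by (intro exI[of _ "insert q Y'"]) auto
  qed (use Suc in blast)
qed

lemma ray_separated_near_points:
  fixes C :: "'a::real_normed_vector set"
  assumes lines: "\<And>v. finite (C \<inter> range (\<lambda>t. t *\<^sub>R v))"
    and near: "\<And>c. c \<in> C \<Longrightarrow> infinite (C \<inter> ball c r)"
  shows "finite M \<Longrightarrow> M \<subseteq> C \<Longrightarrow>
    \<exists>Y. finite Y \<and> Y \<subseteq> C \<and> ray_separated Y \<and> (\<forall>c\<in>M. \<exists>y\<in>Y. dist c y < r)"
proof (induction M rule: finite_induct)
  case empty
  show ?case by (intro exI[of _ "{}"]) (simp add: ray_separated_def)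
next
  case (insert c M)
  then obtain Y where Y: "finite Y" "Y \<subseteq> C" "ray_separated Y" "\<forall>c\<in>M. \<exists>y\<in>Y. dist c y < r"
    by auto
  have "infinite (C \<inter> ball c r)" using insert(4) by (intro near) auto
  then obtain q where "q \<in> C \<inter> ball c r" "q \<notin> Y" "ray_separated (insert q Y)"
    by (rule ray_separated_extend[OF lines Y(1,3) Int_lower1])
  then show ?case using Y by (intro exI[of _ "insert q Y"]) auto
qed

lemma exists_prime_ray_separated_net:
  fixes C :: "'a::real_normed_vector set"
  assumes "compact C" "C \<noteq> {}" and perfect: "\<And>c. c \<in> C \<Longrightarrow> c islimpt C"
    and lines: "\<And>v. finite (C \<inter> range (\<lambda>t. t *\<^sub>R v))" and "\<epsilon> > 0"
  shows "\<exists>p Y. prime p \<and> finite Y \<and> Y \<subseteq> C \<and> ray_separated Y \<and> card Y = p \<and>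
           (\<forall>y\<in>C. \<exists>x\<in>Y. dist y x \<le> \<epsilon>)"
proof -
  have near: "infinite (C \<inter> ball c r)" if "c \<in> C" "r > 0" for c r
    using perfect[OF that(1)] that(2) islimpt_eq_infinite_ball by blast
  obtain N where N: "finite N" "N \<subseteq> C" "C \<subseteq> (\<Union>c\<in>N. ball c (\<epsilon> / 2))"
  proof (rule compactE_image[OF \<open>compact C\<close>, of C "\<lambda>c. ball c (\<epsilon> / 2)"])
    show "C \<subseteq> (\<Union>c\<in>C. ball c (\<epsilon> / 2))" using \<open>\<epsilon> > 0\<close> by force
  qed auto
  \<comment> \<open>first pick one point near every point of the net \<open>N\<close>, then fill up to a prime number of points\<close>
  obtain Y where Y: "finite Y" "Y \<subseteq> C" "ray_separated Y" "\<forall>c\<in>N. \<exists>y\<in>Y. dist c y < \<epsilon> / 2"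
    using ray_separated_near_points[OF lines _ N(1,2)] near \<open>\<epsilon> > 0\<close> by (metis half_gt_zero)
  obtain p where p: "prime p" "card Y < p" using bigger_prime by blast
  obtain c0 where "c0 \<in> C" using \<open>C \<noteq> {}\<close> by blast
  then have "infinite (C \<inter> ball c0 1)" by (rule near) simp
  then have "infinite C" by (metis finite_Int)
  have "card Y \<le> p" using p(2) by simp
  then obtain Y' where Y': "Y \<subseteq> Y'" "finite Y'" "Y' \<subseteq> C" "ray_separated Y'" "card Y' = p"
    using ray_separated_grow[OF lines \<open>infinite C\<close> Y(1-3)] by blast
  have "\<exists>x\<in>Y'. dist y x \<le> \<epsilon>" if y: "y \<in> C" for y
  proof -
    obtain c where "c \<in> N" "dist c y < \<epsilon> / 2" using N(3) y by auto
    moreover obtain x where "x \<in> Y" "dist c x < \<epsilon> / 2" using Y(4) \<open>c \<in> N\<close> by blast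
    moreover have "dist y x \<le> dist c y + dist c x" by (rule dist_triangle3)
    ultimately have "dist y x \<le> \<epsilon>" by linarith
    then show ?thesis using \<open>x \<in> Y\<close> Y'(1) by blast
  qed
  then show ?thesis
    by (intro exI[of _ p] exI[of _ Y'] conjI p(1) Y'(2-5)) blast
qed


lemma closed_convex_curve_compact:
  "closed_convex_curve \<gamma> \<Longrightarrow> compact (\<gamma> ` S1)"
  unfolding closed_convex_curve_def S1_def by (simp add: compact_continuous_image)

lemma closed_convex_curve_islimpt:
  assumes "closed_convex_curve \<gamma>" and "c \<in> \<gamma> ` S1"
  shows "c islimpt \<gamma> ` S1"
proof (rule connected_imp_perfect)
  have cont: "continuous_on S1 \<gamma>" and inj: "inj_on \<gamma> S1"
    using assms(1) by (auto simp: closed_convex_curve_def)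
  show "connected (\<gamma> ` S1)"
    using cont by (intro connected_continuous_image) (simp_all add: S1_def connected_sphere)
  have "1 \<in> S1" "-1 \<in> S1" by (simp_all add: S1_def)
  then have "\<gamma> 1 \<noteq> \<gamma> (-1)" using inj_onD[OF inj, of 1 "-1"] by (auto simp: complex_eq_iff)
  moreover have "\<gamma> 1 \<in> \<gamma> ` S1" "\<gamma> (-1) \<in> \<gamma> ` S1" using \<open>1 \<in> S1\<close> \<open>-1 \<in> S1\<close> by simp_all
  ultimately show "\<gamma> ` S1 \<noteq> {x}" for x by (metis singletonD)
qed (rule assms(2))

lemma closed_convex_curve_finite_on_lines:
  fixes \<gamma> :: "complex \<Rightarrow> real^'n"
  assumes "closed_convex_curve \<gamma>" and "2 \<le> CARD('n)"
  shows "finite (\<gamma> ` S1 \<inter> range (\<lambda>t. t *\<^sub>R v))"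
proof -
  obtain a :: "real^'n" where "a \<noteq> 0" "orthogonal v a"
    using orthogonal_to_vector_exists[of v] assms(2) by auto
  then have "range (\<lambda>t. t *\<^sub>R v) \<subseteq> {x. a \<bullet> x = 0}"
    by (auto simp: orthogonal_def inner_commute)
  moreover have "finite (\<gamma> ` S1 \<inter> {x. a \<bullet> x = 0})"
    using assms(1) \<open>a \<noteq> 0\<close> by (simp add: closed_convex_curve_def)
  ultimately show ?thesis
    using finite_subset[of "\<gamma> ` S1 \<inter> range (\<lambda>t. t *\<^sub>R v)" "\<gamma> ` S1 \<inter> {x. a \<bullet> x = 0}"] by blast
qed

theorem lemma4p1:
  fixes d :: nat and \<gamma> :: "complex \<Rightarrow> real^'n" and \<epsilon> :: real
  assumes "d \<ge> 1" and "CARD('n) = 2 * d"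
    and "closed_convex_curve \<gamma>"
    and "0 \<in> interior (convex hull (\<gamma> ` S1))"
    and "\<epsilon> > 0"
  shows "\<exists>p::nat. prime p \<and> (\<exists>(x :: nat \<Rightarrow> real^'n) g.
           (\<forall>i\<in>{1..p}. x i \<in> \<gamma> ` S1) \<and>
           Zp_ray_action p g \<and>
           x ` {1..p} = {(g ^^ k) (x 1) | k. k < p} \<and>
           (\<forall>y\<in>\<gamma> ` S1. \<exists>i\<in>{1..p}. dist y (x i) \<le> \<epsilon>))"
proof -
  have "2 \<le> CARD('n)" using assms(1,2) by simp
  have "\<gamma> ` S1 \<noteq> {}" by (simp add: S1_def)
  then obtain p Y where p: "prime p" and Y: "finite Y" "Y \<subseteq> \<gamma> ` S1" "ray_separated Y" "card Y = p"
    and net: "\<forall>y\<in>\<gamma> ` S1. \<exists>x\<in>Y. dist y x \<le> \<epsilon>"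
    using exists_prime_ray_separated_net[OF closed_convex_curve_compact[OF assms(3)] _
        closed_convex_curve_islimpt[OF assms(3)]
        closed_convex_curve_finite_on_lines[OF assms(3) \<open>2 \<le> CARD('n)\<close>] assms(5)]
    by blast
  have "Zp_ray_orbit p Y"
    using Zp_ray_orbit_even_dim[OF assms(2) prime_gt_0_nat[OF p] Y(1,4,3)] .
  then obtain g x where g: "Zp_ray_action p g" and x: "x ` {1..p} = Y"
    and orbit: "Y = {(g ^^ k) (x 1) | k. k < p}"
    by (rule Zp_ray_orbit_enumerate)
  have "\<exists>i\<in>{1..p}. dist y (x i) \<le> \<epsilon>" if "y \<in> \<gamma> ` S1" for y
    using net that x by blast
  moreover have "\<forall>i\<in>{1..p}. x i \<in> \<gamma> ` S1" using x Y(2) by blast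
  ultimately show ?thesis using p g x orbit by blast
qed

end
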